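(* Let $M\subset\mathbb{Z}^d$ be a positive affine monoid such that the group $\operatorname{gp}(M)$ generated by $M$ equals $\mathbb{Z}^d$. If $M$ satisfies the integral Carath\'eodory property (ICP), then $M=\mathbb{R}_+M\cap\mathbb{Z}^d$, and every element of $M$ is $f$-covered, i.e. every $x\in M$ can be written as $x=a_1y_1+\dots+a_dy_d$ with $a_1,\dots,a_d\in\mathbb{Z}_{\ge 0}$ and $y_1,\dots,y_d\in\operatorname{Hilb}(M)$ linearly independent.
   Context: An affine monoid is a finitely generated submonoid of $\mathbb{Z}^d$; it is positive if $0$ is its only invertible element. $\operatorname{Hilb}(M)$ is the unique minimal generating set of $M$, consisting of the nonzero elements of $M$ that cannot be written as $x+y$ with $x,y\in M\setminus\{0\}$. $M$ satisfies (ICP) if every element of $M$ can be written as $a_1x_1+\dots+a_dx_d$ with $x_i\in\operatorname{Hilb}(M)$ and $a_i\in\mathbb{Z}_{\ge0}$ (at most $d$ elements of the Hilbert basis, with nonnegative integer coefficients). $\mathbb{R}_+M$ denotes the cone of nonnegative real linear combinations of elements of $M$. *)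

theory Defs
  imports "HOL-Analysis.Analysis"
begin

text \<open>Z^d is modelled as int ^ 'n with d = CARD('n).\<close>

definition rvec :: "int ^ 'n \<Rightarrow> real ^ 'n" where
  "rvec x = (\<chi> i. real_of_int (x $ i))"

definition monoid_gen :: "(int ^ 'n) set \<Rightarrow> (int ^ 'n) set" where
  "monoid_gen G = {x. \<exists>S a. finite S \<and> S \<subseteq> G \<and> x = (\<Sum>g\<in>S. of_nat (a g) *s g)}"

definition affine_monoid :: "(int ^ 'n) set \<Rightarrow> bool" where
  "affine_monoid M \<longleftrightarrow> (\<exists>G. finite G \<and> M = monoid_gen G)"

definition positive_monoid :: "(int ^ 'n) set \<Rightarrow> bool" where
  "positive_monoid M \<longleftrightarrow> (\<forall>x\<in>M. - x \<in> M \<longrightarrow> x = 0)"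

definition gp :: "(int ^ 'n) set \<Rightarrow> (int ^ 'n) set" where
  "gp M = \<Inter>{H. M \<subseteq> H \<and> 0 \<in> H \<and> (\<forall>x\<in>H. \<forall>y\<in>H. x + y \<in> H) \<and> (\<forall>x\<in>H. - x \<in> H)}"

definition Hilb :: "(int ^ 'n) set \<Rightarrow> (int ^ 'n) set" where
  "Hilb M = {x \<in> M. x \<noteq> 0 \<and>
     \<not> (\<exists>y z. y \<in> M - {0} \<and> z \<in> M - {0} \<and> x = y + z)}"

text \<open>(ICP): every element is a nonnegative integer combination of d = CARD('n)
  elements of the Hilbert basis (indexed by 'n, repetitions allowed).\<close>
definition ICP :: "(int ^ 'n) set \<Rightarrow> bool" where
  "ICP M \<longleftrightarrow> (\<forall>x\<in>M. \<exists>(y :: 'n \<Rightarrow> int ^ 'n) (a :: 'n \<Rightarrow> nat).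
      (\<forall>i. y i \<in> Hilb M) \<and> x = (\<Sum>i\<in>UNIV. of_nat (a i) *s y i))"

definition real_cone :: "(int ^ 'n) set \<Rightarrow> (real ^ 'n) set" where
  "real_cone M = {v. \<exists>S c. finite S \<and> S \<subseteq> M \<and> (\<forall>g\<in>S. c g \<ge> 0) \<and>
      v = (\<Sum>g\<in>S. c g *\<^sub>R rvec g)}"

definition f_covered :: "(int ^ 'n) set \<Rightarrow> int ^ 'n \<Rightarrow> bool" where
  "f_covered M x \<longleftrightarrow> (\<exists>(y :: 'n \<Rightarrow> int ^ 'n) (a :: 'n \<Rightarrow> nat).
      (\<forall>i. y i \<in> Hilb M) \<and> inj (\<lambda>i. rvec (y i)) \<and> independent (range (\<lambda>i. rvec (y i))) \<and>
      x = (\<Sum>i\<in>UNIV. of_nat (a i) *s y i))"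

end

(* Write x in the real cone as a nonnegative real combination of elements g of M.
   Then n x minus the combination with coefficients floor(n c_g) is a bounded lattice
   point, so for infinitely many n = 1 + j D it is one fixed difference a - b of elements
   of M, and n x + b lies in M.  Here D is a common denominator of the inverses of all
   invertible matrices whose columns are d Hilbert basis elements.  Shifting b inside M
   gives w with n x + D w in M for those n, w avoiding every proper subspace spanned by
   d Hilbert basis elements.  By (ICP) and the pigeonhole principle one d-tuple sigma of
   Hilbert basis elements represents infinitely many of the points n x + D w with natural
   coefficients, and sigma spans, since otherwise its span would contain w.  In the
   coordinates xi of x and eta of w with respect to sigma these coefficients are
   n xi + D eta; as D xi and D eta are integral and n = 1 (mod D), xi is integral, and
   letting n grow shows xi >= 0.  So x is a natural combination of the linearly
   independent Hilbert basis elements sigma. *)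
theory Submission
  imports Defs
begin

lemma rvec_add: "rvec (x + y) = rvec x + rvec y"
  and rvec_diff: "rvec (x - y) = rvec x - rvec y"
  and rvec_zero [simp]: "rvec 0 = 0"
  and rvec_smult: "rvec (c *s x) = of_int c *\<^sub>R rvec x"
  by (simp_all add: rvec_def vec_eq_iff)

lemma rvec_sum: "rvec (\<Sum>i\<in>I. f i) = (\<Sum>i\<in>I. rvec (f i))"
  by (induction I rule: infinite_finite_induct) (auto simp: rvec_add)

lemma rvec_inject: "rvec x = rvec y \<longleftrightarrow> x = y"
  by (simp add: rvec_def vec_eq_iff)

lemma rvec_Ints: "rvec x $ i \<in> \<int>"
  by (simp add: rvec_def)

lemma monoid_gen_iff:
  assumes "finite G"
  shows "x \<in> monoid_gen G \<longleftrightarrow> (\<exists>a. x = (\<Sum>g\<in>G. of_nat (a g) *s g))"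
proof
  assume "x \<in> monoid_gen G"
  then obtain S a where S: "finite S" "S \<subseteq> G" and x: "x = (\<Sum>g\<in>S. of_nat (a g) *s g)"
    unfolding monoid_gen_def by blast
  have "x = (\<Sum>g\<in>G. of_nat (if g \<in> S then a g else 0) *s g)"
    unfolding x using S assms by (intro sum.mono_neutral_cong_left) auto
  then show "\<exists>a. x = (\<Sum>g\<in>G. of_nat (a g) *s g)" by (intro exI)
qed (use assms in \<open>auto simp: monoid_gen_def\<close>)

lemma zero_in_monoid_gen: "0 \<in> monoid_gen G"
  unfolding monoid_gen_def by (intro CollectI exI[of _ "{}"]) auto

lemma generator_in_monoid_gen: "g \<in> G \<Longrightarrow> g \<in> monoid_gen G"
  unfolding monoid_gen_def by (intro CollectI exI[of _ "{g}"] exI[of _ "\<lambda>_. 1"]) auto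

lemma add_in_monoid_gen:
  assumes "finite G" "x \<in> monoid_gen G" "y \<in> monoid_gen G"
  shows "x + y \<in> monoid_gen G"
proof -
  obtain a b where "x = (\<Sum>g\<in>G. of_nat (a g) *s g)" "y = (\<Sum>g\<in>G. of_nat (b g) *s g)"
    using assms by (auto simp: monoid_gen_iff)
  then have "x + y = (\<Sum>g\<in>G. of_nat (a g + b g) *s g)"
    by (simp add: sum.distrib)
  then show ?thesis
    unfolding monoid_gen_iff[OF assms(1)] by (intro exI)
qed

lemma smult_in_monoid_gen:
  assumes "finite G" "x \<in> monoid_gen G"
  shows "of_nat k *s x \<in> monoid_gen G"
proof (induction k)
  case (Suc k)
  then show ?case
    using add_in_monoid_gen[OF assms] by simp
qed (simp add: zero_in_monoid_gen)

lemma sum_in_monoid_gen: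
  assumes "finite G" "\<And>i. i \<in> I \<Longrightarrow> f i \<in> monoid_gen G"
  shows "(\<Sum>i\<in>I. f i) \<in> monoid_gen G"
  using assms(2)
  by (induction I rule: infinite_finite_induct)
     (auto simp: zero_in_monoid_gen add_in_monoid_gen[OF assms(1)])

lemma Hilb_subset: "Hilb M \<subseteq> M"
  unfolding Hilb_def by auto

lemma Hilb_monoid_gen_subset:
  assumes "finite G"
  shows "Hilb (monoid_gen G) \<subseteq> G"
proof
  fix x assume "x \<in> Hilb (monoid_gen G)"
  then have "x \<in> monoid_gen G" "x \<noteq> 0" and irreducible:
    "\<And>y z. y \<in> monoid_gen G - {0} \<Longrightarrow> z \<in> monoid_gen G - {0} \<Longrightarrow> x \<noteq> y + z"
    unfolding Hilb_def by blast+
  then obtain a where x: "x = (\<Sum>g\<in>G. of_nat (a g) *s g)"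
    using assms by (auto simp: monoid_gen_iff)
  obtain g where g: "g \<in> G" "of_nat (a g) *s g \<noteq> 0"
    using \<open>x \<noteq> 0\<close> unfolding x by (meson sum.neutral)
  define r where "r = (\<Sum>h\<in>G-{g}. of_nat (a h) *s h)"
  have "r \<in> monoid_gen G"
    unfolding r_def using assms
    by (intro sum_in_monoid_gen smult_in_monoid_gen generator_in_monoid_gen) auto
  moreover have "of_nat (a g) *s g \<in> monoid_gen G"
    using assms g by (intro smult_in_monoid_gen generator_in_monoid_gen)
  moreover have "x = of_nat (a g) *s g + r"
    unfolding x r_def using assms g by (simp add: sum.remove)
  ultimately have x_multiple: "x = of_nat (a g) *s g"
    using irreducible g by fastforce
  obtain k where k: "a g = Suc k"
    using g by (cases "a g") auto
  have "of_nat k *s g = 0"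
    using irreducible[of g "of_nat k *s g"] x_multiple k g assms
    by (auto simp: generator_in_monoid_gen smult_in_monoid_gen)
  then show "x \<in> G"
    using x_multiple k g by auto
qed

lemma finite_Hilb_monoid_gen: "finite G \<Longrightarrow> finite (Hilb (monoid_gen G))"
  using Hilb_monoid_gen_subset finite_subset by blast

lemma gp_subset_differences:
  assumes "0 \<in> M" "\<And>x y. x \<in> M \<Longrightarrow> y \<in> M \<Longrightarrow> x + y \<in> M"
  shows "gp M \<subseteq> {a - b | a b. a \<in> M \<and> b \<in> M}"
proof -
  let ?D = "{a - b | a b. a \<in> M \<and> b \<in> M}"
  have "M \<subseteq> ?D" "0 \<in> ?D" "\<forall>x\<in>?D. - x \<in> ?D"
    using assms(1) by force+
  moreover have "\<forall>x\<in>?D. \<forall>y\<in>?D. x + y \<in> ?D"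
  proof (intro ballI)
    fix x y assume "x \<in> ?D" "y \<in> ?D"
    then obtain a b c d where "a \<in> M" "b \<in> M" "c \<in> M" "d \<in> M" "x + y = (a + c) - (b + d)"
      by auto
    then show "x + y \<in> ?D"
      using assms(2) by blast
  qed
  ultimately show ?thesis
    unfolding gp_def by blast
qed

lemma span_rvec_eq_UNIV:
  fixes M :: "(int ^ 'n) set"
  assumes "\<And>p. \<exists>a\<in>M. \<exists>b\<in>M. p = a - b"
  shows "span (rvec ` M) = UNIV"
proof -
  have "rvec p \<in> span (rvec ` M)" for p
  proof -
    obtain a b where "a \<in> M" "b \<in> M" "rvec p = rvec a - rvec b"
      using assms[of p] by (auto simp: rvec_diff)
    then show ?thesis
      by (simp add: span_diff span_base)
  qed
  moreover have "axis i 1 = rvec (axis i 1)" for i :: 'n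
    by (simp add: rvec_def vec_eq_iff axis_def)
  ultimately have "Basis \<subseteq> span (rvec ` M)"
    by (auto simp: Basis_vec_def)
  then show ?thesis
    by (metis span_Basis span_minimal subspace_span top.extremum_uniqueI)
qed

lemma monoid_gen_differences:
  assumes "finite G" "gp (monoid_gen G) = UNIV"
  shows "\<exists>a\<in>monoid_gen G. \<exists>b\<in>monoid_gen G. p = a - b"
proof -
  have "gp (monoid_gen G) \<subseteq> {a - b | a b. a \<in> monoid_gen G \<and> b \<in> monoid_gen G}"
    using assms(1) by (intro gp_subset_differences zero_in_monoid_gen add_in_monoid_gen)
  then show ?thesis
    using assms(2) by blast
qed

lemma line_meets_subspace_twice:
  fixes u h :: "'a::real_vector"
  assumes "subspace W" "a \<noteq> b" "u + a *\<^sub>R h \<in> W" "u + b *\<^sub>R h \<in> W"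
  shows "h \<in> W" "u \<in> W"
proof -
  have "(a - b) *\<^sub>R h \<in> W"
    using subspace_diff[OF assms(1,3,4)] by (simp add: scaleR_diff_left)
  then have "inverse (a - b) *\<^sub>R ((a - b) *\<^sub>R h) \<in> W"
    by (rule subspace_scale[OF assms(1)])
  then show "h \<in> W"
    using assms(2) by simp
  then have "(u + a *\<^sub>R h) - a *\<^sub>R h \<in> W"
    using assms(1,3) by (intro subspace_diff subspace_scale)
  then show "u \<in> W"
    by simp
qed

lemma finite_line_points_in_subspace:
  fixes u h :: "'a::real_vector"
  assumes "subspace W" "u \<notin> W \<or> h \<notin> W"
  shows "finite {t::nat. u + real t *\<^sub>R h \<in> W}"
proof (cases "{t::nat. u + real t *\<^sub>R h \<in> W} = {}")
  case False
  then obtain t0 where t0: "u + real t0 *\<^sub>R h \<in> W"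
    by blast
  have "t = t0" if "u + real t *\<^sub>R h \<in> W" for t
  proof (rule ccontr)
    assume "t \<noteq> t0"
    then have "h \<in> W \<and> u \<in> W"
      using line_meets_subspace_twice[OF assms(1) _ that t0] by simp
    with assms(2) show False
      by blast
  qed
  then have "{t::nat. u + real t *\<^sub>R h \<in> W} \<subseteq> {t0}"
    by blast
  then show ?thesis
    using finite_subset by blast
qed simp

lemma translate_avoiding_subspaces:
  fixes S :: "'a::real_vector set"
  assumes "0 \<in> S" and S_add: "\<And>x y. x \<in> S \<Longrightarrow> y \<in> S \<Longrightarrow> x + y \<in> S"
    and "span S = UNIV" and "finite \<W>" and "\<And>W. W \<in> \<W> \<Longrightarrow> subspace W \<and> W \<noteq> UNIV"
  shows "\<exists>s\<in>S. v + s \<notin> \<Union>\<W>"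
  using assms(4,5)
proof (induction \<W> rule: finite_induct)
  case empty
  then show ?case
    using assms(1) by auto
next
  case (insert W \<W>)
  then obtain s where "s \<in> S" and u: "v + s \<notin> \<Union>\<W>"
    by auto
  have W: "subspace W" "W \<noteq> UNIV"
    using insert.prems by auto
  obtain h where "h \<in> S" "h \<notin> W"
    using W \<open>span S = UNIV\<close> span_minimal[of S W] by auto
  have multiple: "real t *\<^sub>R h \<in> S" for t
    by (induction t) (use assms(1) S_add \<open>h \<in> S\<close> in \<open>auto simp: scaleR_add_left\<close>)
  \<comment> \<open>The ray through v + s in direction h meets each member of insert W \<W> at most once.\<close>
  have "finite (\<Union>W'\<in>insert W \<W>. {t::nat. (v + s) + real t *\<^sub>R h \<in> W'})"
    using insert.hyps(1) insert.prems u \<open>h \<notin> W\<close>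
    by (intro finite_UN_I finite_line_points_in_subspace) auto
  then obtain t where "t \<notin> (\<Union>W'\<in>insert W \<W>. {t::nat. (v + s) + real t *\<^sub>R h \<in> W'})"
    using ex_new_if_finite[OF infinite_UNIV_nat] by blast
  then have "v + (s + real t *\<^sub>R h) \<notin> \<Union>(insert W \<W>)"
    by (simp add: add.assoc)
  then show ?case
    using S_add \<open>s \<in> S\<close> multiple by blast
qed

lemma matrix_inv_right: "invertible A \<Longrightarrow> A ** matrix_inv A = mat 1"
  and matrix_inv_left: "invertible A \<Longrightarrow> matrix_inv A ** A = mat 1"
  unfolding invertible_def matrix_inv_def by (metis (mono_tags, lifting) someI_ex)+

lemma det_Ints:
  fixes A :: "real ^ 'n ^ 'n"
  assumes "\<And>i j. A $ i $ j \<in> \<int>"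
  shows "det A \<in> \<int>"
  unfolding det_def by (intro Ints_sum Ints_mult Ints_prod) (auto simp: assms)

lemma det_mult_matrix_inv_vector_Ints:
  fixes A :: "real ^ 'n ^ 'n"
  assumes "invertible A" "\<And>i j. A $ i $ j \<in> \<int>" "\<And>i. b $ i \<in> \<int>"
  shows "det A * (matrix_inv A *v b) $ k \<in> \<int>"
proof -
  have solution: "A *v (matrix_inv A *v b) = b"
    using assms(1) by (simp add: matrix_vector_mul_assoc matrix_inv_right)
  have "(matrix_inv A *v b) $ k * det A = det (\<chi> i j. if j = k then b $ i else A $ i $ j)"
    using cramer_lemma[of k A "matrix_inv A *v b", unfolded solution] by simp
  also have "\<dots> \<in> \<int>"
    using assms(2,3) by (intro det_Ints) auto
  finally show ?thesis
    by (simp add: mult.commute)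
qed

lemma common_denominator_matrix_inv:
  fixes \<A> :: "(real ^ 'n ^ 'n) set"
  assumes "finite \<A>" "\<And>A. A \<in> \<A> \<Longrightarrow> invertible A \<and> (\<forall>i j. A $ i $ j \<in> \<int>)"
  shows "\<exists>D::nat. D > 0 \<and> (\<forall>A\<in>\<A>. \<forall>b k. (\<forall>i. b $ i \<in> \<int>) \<longrightarrow> real D * (matrix_inv A *v b) $ k \<in> \<int>)"
  using assms
proof (induction \<A> rule: finite_induct)
  case empty
  then show ?case
    by (intro exI[of _ 1]) simp
next
  case (insert A \<A>)
  then obtain D :: nat where "D > 0"
    and D: "\<And>B b k. B \<in> \<A> \<Longrightarrow> \<forall>i. b $ i \<in> \<int> \<Longrightarrow> real D * (matrix_inv B *v b) $ k \<in> \<int>"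
    by auto
  have "invertible A" "\<And>i j. A $ i $ j \<in> \<int>"
    using insert.prems by auto
  then obtain d where d: "det A = of_int d" "d \<noteq> 0"
    by (metis Ints_cases det_Ints invertible_det_nz of_int_0)
  have "real (D * nat \<bar>d\<bar>) * (matrix_inv B *v b) $ k \<in> \<int>"
    if "B \<in> insert A \<A>" "\<forall>i. b $ i \<in> \<int>" for B b k
  proof (cases "B = A")
    case True
    have "real (nat \<bar>d\<bar>) = of_int (sgn d) * det A"
      using d by (metis abs_sgn mult.commute of_int_mult of_nat_nat abs_ge_zero)
    then have "real (D * nat \<bar>d\<bar>) * (matrix_inv B *v b) $ k
        = of_int (int D * sgn d) * (det A * (matrix_inv A *v b) $ k)"
      using True by (simp add: mult_ac)
    also have "\<dots> \<in> \<int>"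
      using \<open>invertible A\<close> \<open>\<And>i j. A $ i $ j \<in> \<int>\<close> that(2)
      by (intro Ints_mult Ints_of_int det_mult_matrix_inv_vector_Ints) auto
    finally show ?thesis .
  next
    case False
    have "real (D * nat \<bar>d\<bar>) * (matrix_inv B *v b) $ k = real (nat \<bar>d\<bar>) * (real D * (matrix_inv B *v b) $ k)"
      by simp
    moreover have "real D * (matrix_inv B *v b) $ k \<in> \<int>"
      using D False that by blast
    ultimately show ?thesis
      by (metis Ints_mult Ints_of_nat)
  qed
  then show ?case
    using \<open>D > 0\<close> d(2) by (intro exI[of _ "D * nat \<bar>d\<bar>"]) auto
qed

lemma spanning_family_independent:
  fixes f :: "'n \<Rightarrow> real ^ 'n"
  assumes "span (range f) = UNIV"
  shows "inj f \<and> independent (range f)"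
proof -
  have "CARD('n) \<le> card (range f)"
    using span_card_ge_dim[of "range f" UNIV] assms by simp
  moreover have "card (range f) \<le> CARD('n)"
    by (rule card_image_le) simp
  ultimately have "card (range f) = CARD('n)"
    by linarith
  then show ?thesis
    using assms card_le_dim_spanning[of "range f" UNIV] inj_on_iff_eq_card[of UNIV f] by auto
qed

definition column_matrix :: "('n \<Rightarrow> int ^ 'n) \<Rightarrow> real ^ 'n ^ 'n" where
  "column_matrix \<sigma> = (\<chi> r i. real_of_int (\<sigma> i $ r))"

lemma column_matrix_mult: "column_matrix \<sigma> *v \<xi> = (\<Sum>i\<in>UNIV. \<xi> $ i *\<^sub>R rvec (\<sigma> i))"
  by (simp add: vec_eq_iff column_matrix_def matrix_vector_mult_def rvec_def sum_component mult.commute)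

lemma column_matrix_Ints: "column_matrix \<sigma> $ r $ i \<in> \<int>"
  by (simp add: column_matrix_def)

lemma invertible_column_matrix_iff:
  "invertible (column_matrix \<sigma>) \<longleftrightarrow> span (range (\<lambda>i. rvec (\<sigma> i))) = UNIV"
proof -
  have "columns (column_matrix \<sigma>) = range (\<lambda>i. rvec (\<sigma> i))"
    by (auto simp: columns_def column_def column_matrix_def rvec_def)
  then show ?thesis
    by (simp add: invertible_right_inverse matrix_right_invertible_span_columns span_vec_eq)
qed

lemma rvec_combination_in_span:
  "rvec (\<Sum>i\<in>UNIV. of_nat (\<alpha> i) *s \<sigma> i) \<in> span (range (\<lambda>i. rvec (\<sigma> i)))"
  unfolding rvec_sum rvec_smult by (intro span_sum span_scale span_base) auto

lemma common_denominator_column_matrices: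
  fixes \<Sigma> :: "('n \<Rightarrow> int ^ 'n) set"
  assumes "finite \<Sigma>"
  obtains D :: nat where "D > 0"
    "\<And>\<sigma> v k. \<sigma> \<in> \<Sigma> \<Longrightarrow> invertible (column_matrix \<sigma>) \<Longrightarrow>
      real D * (matrix_inv (column_matrix \<sigma>) *v rvec v) $ k \<in> \<int>"
proof -
  have "\<exists>D::nat. D > 0 \<and> (\<forall>A\<in>column_matrix ` {\<sigma>\<in>\<Sigma>. invertible (column_matrix \<sigma>)}.
      \<forall>b k. (\<forall>i. b $ i \<in> \<int>) \<longrightarrow> real D * (matrix_inv A *v b) $ k \<in> \<int>)"
    using assms column_matrix_Ints by (intro common_denominator_matrix_inv) auto
  then obtain D :: nat where "D > 0" and D: "\<forall>A\<in>column_matrix ` {\<sigma>\<in>\<Sigma>. invertible (column_matrix \<sigma>)}.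
      \<forall>b k. (\<forall>i. b $ i \<in> \<int>) \<longrightarrow> real D * (matrix_inv A *v b) $ k \<in> \<int>"
    by blast
  have "real D * (matrix_inv (column_matrix \<sigma>) *v rvec v) $ k \<in> \<int>"
    if "\<sigma> \<in> \<Sigma>" "invertible (column_matrix \<sigma>)" for \<sigma> v k
    using D rvec_Ints that by blast
  with \<open>D > 0\<close> show ?thesis
    using that by blast
qed

lemma finite_bounded_int_vectors: "finite {v :: int ^ 'n. \<forall>i. \<bar>v $ i\<bar> \<le> B i}"
proof -
  have "{v :: int ^ 'n. \<forall>i. \<bar>v $ i\<bar> \<le> B i} \<subseteq> vec_lambda ` (\<Pi> i\<in>UNIV. {-B i..B i})"
  proof
    fix v :: "int ^ 'n" assume "v \<in> {v. \<forall>i. \<bar>v $ i\<bar> \<le> B i}"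
    then have "vec_nth v \<in> (\<Pi> i\<in>UNIV. {-B i..B i})"
      by (simp add: Pi_iff abs_le_iff) (metis minus_le_iff)
    then show "v \<in> vec_lambda ` (\<Pi> i\<in>UNIV. {-B i..B i})"
      by (rule rev_image_eqI) simp
  qed
  moreover have "finite (\<Pi> i\<in>UNIV. {-B i..B i})"
    using finite_PiE[of UNIV "\<lambda>i. {-B i..B i}"] by (simp add: PiE_UNIV_domain)
  ultimately show ?thesis
    using finite_subset by blast
qed

lemma monoid_gen_cone_multiples_residue:
  fixes x :: "int ^ 'n" and f :: "nat \<Rightarrow> nat"
  assumes "finite G" "rvec x \<in> real_cone (monoid_gen G)"
  shows "\<exists>p. infinite {j. of_nat (f j) *s x - p \<in> monoid_gen G}"
proof -
  obtain S c where S: "finite S" "S \<subseteq> monoid_gen G" "\<And>g. g \<in> S \<Longrightarrow> c g \<ge> 0"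
    and x: "rvec x = (\<Sum>g\<in>S. c g *\<^sub>R rvec g)"
    using assms(2) unfolding real_cone_def by blast
  define fl where "fl j g = \<lfloor>real (f j) * c g\<rfloor>" for j g
  define p where "p j = of_nat (f j) *s x - (\<Sum>g\<in>S. fl j g *s g)" for j
  have in_monoid: "of_nat (f j) *s x - p j \<in> monoid_gen G" for j
  proof -
    have "fl j g *s g = of_nat (nat (fl j g)) *s g" if "g \<in> S" for g
      using S(3)[OF that] by (simp add: fl_def)
    then have "of_nat (f j) *s x - p j = (\<Sum>g\<in>S. of_nat (nat (fl j g)) *s g)"
      by (simp add: p_def)
    also have "\<dots> \<in> monoid_gen G"
      using assms(1) S(2) by (intro sum_in_monoid_gen smult_in_monoid_gen) auto
    finally show ?thesis .
  qed
  have "\<bar>p j $ i\<bar> \<le> (\<Sum>g\<in>S. \<bar>g $ i\<bar>)" for j i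
  proof -
    have "real_of_int \<bar>p j $ i\<bar> = \<bar>\<Sum>g\<in>S. (real (f j) * c g - fl j g) * g $ i\<bar>"
      using arg_cong[OF x, of "\<lambda>v. real (f j) * v $ i"]
      by (simp add: p_def rvec_def sum_component sum_distrib_left sum_subtractf algebra_simps)
    also have "\<dots> \<le> (\<Sum>g\<in>S. \<bar>(real (f j) * c g - fl j g) * g $ i\<bar>)"
      by (rule sum_abs)
    also have "\<dots> \<le> (\<Sum>g\<in>S. \<bar>real_of_int (g $ i)\<bar>)"
      unfolding fl_def abs_mult
      by (intro sum_mono mult_left_le_one_le) linarith+
    also have "\<dots> = of_int (\<Sum>g\<in>S. \<bar>g $ i\<bar>)"
      by simp
    finally show ?thesis
      by (simp only: of_int_le_iff)
  qed
  then have "finite (range p)"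
    by (intro finite_subset[OF _ finite_bounded_int_vectors]) auto
  then obtain j0 where "infinite {j. p j = p j0}"
    using pigeonhole_infinite[of UNIV p] by auto
  moreover have "{j. p j = p j0} \<subseteq> {j. of_nat (f j) *s x - p j0 \<in> monoid_gen G}"
    using in_monoid by (metis (mono_tags, lifting) Collect_mono)
  ultimately show ?thesis
    using infinite_super by blast
qed

lemma progression_coefficient_in_Nats:
  fixes \<xi> \<gamma> :: real
  assumes "D > 0" "real D * \<xi> \<in> \<int>" "\<gamma> \<in> \<int>" "infinite J"
    and progression: "\<And>j. j \<in> J \<Longrightarrow> (1 + real j * real D) * \<xi> + \<gamma> \<in> \<nat>"
  shows "\<xi> \<in> \<nat>"
proof -
  obtain j0 where "j0 \<in> J"
    using \<open>infinite J\<close> by (metis finite.emptyI ex_in_conv)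
  have "\<xi> = ((1 + real j0 * real D) * \<xi> + \<gamma>) - real j0 * (real D * \<xi>) - \<gamma>"
    by (simp add: algebra_simps)
  also have "\<dots> \<in> \<int>"
    using progression[OF \<open>j0 \<in> J\<close>] assms(2,3) Nats_subset_Ints
    by (meson Ints_diff Ints_mult Ints_of_nat subsetD)
  finally have "\<xi> \<in> \<int>" .
  moreover have "\<xi> \<ge> 0"
  proof (rule ccontr)
    assume "\<not> \<xi> \<ge> 0"
    moreover obtain k where "\<xi> = of_int k"
      using \<open>\<xi> \<in> \<int>\<close> by (rule Ints_cases)
    ultimately have "\<xi> \<le> -1"
      by simp
    obtain j where "j \<in> J" "j > nat \<lceil>\<gamma>\<rceil>"
      using \<open>infinite J\<close> infinite_nat_iff_unbounded by blast
    then have "real j > \<gamma>"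
      using real_nat_ceiling_ge[of \<gamma>] by linarith
    have "(1 + real j * real D) * \<xi> + \<gamma> \<le> - (1 + real j * real D) + \<gamma>"
      using mult_left_mono[OF \<open>\<xi> \<le> -1\<close>, of "1 + real j * real D"] by simp
    also have "\<dots> < 0"
      using \<open>real j > \<gamma>\<close> \<open>D > 0\<close> mult_left_mono[of 1 "real D" "real j"] by simp
    finally show False
      using progression[OF \<open>j \<in> J\<close>] by (auto elim!: Nats_cases)
  qed
  ultimately show ?thesis
    by (simp add: Nats_altdef2)
qed

lemma nat_coordinates_of_progression:
  fixes \<sigma> :: "'n \<Rightarrow> int ^ 'n" and x w :: "int ^ 'n"
  assumes inv: "invertible (column_matrix \<sigma>)" and "D > 0"
    and denom: "\<And>v k. real D * (matrix_inv (column_matrix \<sigma>) *v rvec v) $ k \<in> \<int>"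
    and "infinite J"
    and rep: "\<And>j. j \<in> J \<Longrightarrow> \<exists>\<alpha> :: 'n \<Rightarrow> nat.
      of_nat (1 + j * D) *s x + of_nat D *s w = (\<Sum>i\<in>UNIV. of_nat (\<alpha> i) *s \<sigma> i)"
  shows "\<exists>e :: 'n \<Rightarrow> nat. x = (\<Sum>i\<in>UNIV. of_nat (e i) *s \<sigma> i)"
proof -
  let ?A = "column_matrix \<sigma>"
  define \<xi> where "\<xi> = matrix_inv ?A *v rvec x"
  define \<gamma> where "\<gamma> = real D *\<^sub>R (matrix_inv ?A *v rvec w)"
  have rvec_combination: "rvec (\<Sum>i\<in>UNIV. of_nat (\<alpha> i) *s \<sigma> i) = ?A *v (\<chi> i. real (\<alpha> i))" for \<alpha>
    by (simp add: column_matrix_mult rvec_sum rvec_smult)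
  have coordinates: "(1 + real j * real D) * \<xi> $ k + \<gamma> $ k \<in> \<nat>" if j: "j \<in> J" for j k
  proof -
    obtain \<alpha> :: "'n \<Rightarrow> nat" where
      \<alpha>: "of_nat (1 + j * D) *s x + of_nat D *s w = (\<Sum>i\<in>UNIV. of_nat (\<alpha> i) *s \<sigma> i)"
      using rep[OF j] by blast
    have "(\<chi> i. real (\<alpha> i)) = matrix_inv ?A *v (?A *v (\<chi> i. real (\<alpha> i)))"
      using inv by (simp add: matrix_vector_mul_assoc matrix_inv_left)
    also have "\<dots> = matrix_inv ?A *v rvec (of_nat (1 + j * D) *s x + of_nat D *s w)"
      unfolding \<alpha> rvec_combination ..
    also have "\<dots> = (1 + real j * real D) *\<^sub>R \<xi> + \<gamma>"
      by (simp add: \<xi>_def \<gamma>_def rvec_add rvec_smult matrix_vector_right_distrib matrix_vector_mult_scaleR scaleR_add_left)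
    finally have "real (\<alpha> k) = (1 + real j * real D) * \<xi> $ k + \<gamma> $ k"
      by (simp add: vec_eq_iff)
    then show ?thesis
      by (metis of_nat_in_Nats)
  qed
  have "\<xi> $ k \<in> \<nat>" for k
  proof (rule progression_coefficient_in_Nats[OF \<open>D > 0\<close> _ _ \<open>infinite J\<close> coordinates])
    show "real D * \<xi> $ k \<in> \<int>"
      using denom[of x k] by (simp add: \<xi>_def)
    show "\<gamma> $ k \<in> \<int>"
      using denom[of w k] by (simp add: \<gamma>_def)
  qed
  then have e: "real (nat \<lfloor>\<xi> $ k\<rfloor>) = \<xi> $ k" for k
    by (metis Nats_cases floor_of_nat nat_int)
  have "rvec x = ?A *v \<xi>"
    using inv by (simp add: \<xi>_def matrix_vector_mul_assoc matrix_inv_right)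
  also have "\<dots> = rvec (\<Sum>i\<in>UNIV. of_nat (nat \<lfloor>\<xi> $ i\<rfloor>) *s \<sigma> i)"
    unfolding rvec_combination by (simp add: vec_eq_iff e)
  finally show ?thesis
    unfolding rvec_inject by (intro exI)
qed

lemma progression_in_span_imp_in_span:
  fixes x w :: "int ^ 'n"
  assumes "subspace W" "D > 0" "j1 \<noteq> j2"
    and "rvec (of_nat (1 + j1 * D) *s x + of_nat D *s w) \<in> W"
    and "rvec (of_nat (1 + j2 * D) *s x + of_nat D *s w) \<in> W"
  shows "rvec w \<in> W"
proof -
  have "rvec (of_nat (1 + j * D) *s x + of_nat D *s w) = real D *\<^sub>R rvec w + real (1 + j * D) *\<^sub>R rvec x" for j
    by (simp add: rvec_add rvec_smult algebra_simps)
  then have "real D *\<^sub>R rvec w \<in> W"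
    using line_meets_subspace_twice(2)[OF assms(1), of "real (1 + j1 * D)" "real (1 + j2 * D)"] assms by simp
  then have "inverse (real D) *\<^sub>R (real D *\<^sub>R rvec w) \<in> W"
    by (rule subspace_scale[OF assms(1)])
  then show ?thesis
    using \<open>D > 0\<close> by simp
qed

lemma generic_progression_in_monoid_gen:
  fixes x :: "int ^ 'n" and \<W> :: "(real ^ 'n) set set"
  assumes "finite G" "gp (monoid_gen G) = UNIV" "rvec x \<in> real_cone (monoid_gen G)" "D > 0"
    and "finite \<W>" "\<And>W. W \<in> \<W> \<Longrightarrow> subspace W \<and> W \<noteq> UNIV"
  obtains J w where "infinite J" "rvec w \<notin> \<Union>\<W>"
    "\<And>j. j \<in> J \<Longrightarrow> of_nat (1 + j * D) *s x + of_nat D *s w \<in> monoid_gen G"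
proof -
  let ?M = "monoid_gen G"
  obtain p where J: "infinite {j. of_nat (1 + j * D) *s x - p \<in> ?M}"
    using monoid_gen_cone_multiples_residue[OF assms(1,3), of "\<lambda>j. 1 + j * D"] by blast
  obtain a b where "a \<in> ?M" "b \<in> ?M" "p = a - b"
    using monoid_gen_differences[OF assms(1,2)] by blast
  have "\<exists>s\<in>rvec ` ?M. rvec b + s \<notin> \<Union>\<W>"
  proof (rule translate_avoiding_subspaces[OF _ _ _ assms(5,6)])
    show "0 \<in> rvec ` ?M"
      using zero_in_monoid_gen rvec_zero by (metis image_eqI)
    show "s + t \<in> rvec ` ?M" if "s \<in> rvec ` ?M" "t \<in> rvec ` ?M" for s t
      using that add_in_monoid_gen[OF assms(1)] by (auto simp flip: rvec_add)
    show "span (rvec ` ?M) = UNIV"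
      using span_rvec_eq_UNIV monoid_gen_differences[OF assms(1,2)] by blast
  qed
  then obtain m where "m \<in> ?M" and generic: "rvec (b + m) \<notin> \<Union>\<W>"
    by (auto simp: rvec_add)
  have "of_nat (1 + j * D) *s x + of_nat D *s (b + m) \<in> ?M"
    if "of_nat (1 + j * D) *s x - p \<in> ?M" for j
  proof -
    have "of_nat (1 + j * D) *s x + of_nat D *s (b + m) =
        (of_nat (1 + j * D) *s x - p) + a + (of_nat (D - 1) *s b + of_nat D *s m)"
      using \<open>p = a - b\<close> \<open>D > 0\<close> by (simp add: vec_eq_iff of_nat_diff algebra_simps)
    also have "\<dots> \<in> ?M"
      using that \<open>a \<in> ?M\<close> \<open>b \<in> ?M\<close> \<open>m \<in> ?M\<close> assms(1)
      by (intro add_in_monoid_gen smult_in_monoid_gen)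
    finally show ?thesis .
  qed
  then show ?thesis
    using that[OF J generic] by blast
qed

lemma ICP_common_representation:
  fixes M :: "(int ^ 'n) set"
  assumes "ICP M" "finite (Hilb M)" "infinite J" "\<And>j. j \<in> J \<Longrightarrow> z j \<in> M"
  obtains \<sigma> where "\<And>i. \<sigma> i \<in> Hilb M"
    "infinite {j\<in>J. \<exists>\<alpha> :: 'n \<Rightarrow> nat. z j = (\<Sum>i\<in>UNIV. of_nat (\<alpha> i) *s \<sigma> i)}"
proof -
  have "finite {\<sigma> :: 'n \<Rightarrow> int ^ 'n. \<forall>i. \<sigma> i \<in> Hilb M}"
    using finite_set_of_finite_funs[of "UNIV :: 'n set" "Hilb M"] assms(2) by simp
  moreover have "\<forall>j\<in>J. \<exists>\<sigma>\<in>{\<sigma>. \<forall>i. \<sigma> i \<in> Hilb M}. \<exists>\<alpha> :: 'n \<Rightarrow> nat. z j = (\<Sum>i\<in>UNIV. of_nat (\<alpha> i) *s \<sigma> i)"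
    using assms(1,4) unfolding ICP_def by blast
  ultimately have "\<exists>\<sigma>\<in>{\<sigma>. \<forall>i. \<sigma> i \<in> Hilb M}.
      infinite {j\<in>J. \<exists>\<alpha> :: 'n \<Rightarrow> nat. z j = (\<Sum>i\<in>UNIV. of_nat (\<alpha> i) *s \<sigma> i)}"
    by (rule pigeonhole_infinite_rel[OF assms(3)])
  then show ?thesis
    using that by blast
qed

lemma ICP_spanning_representation:
  fixes M :: "(int ^ 'n) set"
  assumes "ICP M" "finite (Hilb M)" "infinite J" "D > 0"
    and progression: "\<And>j. j \<in> J \<Longrightarrow> of_nat (1 + j * D) *s x + of_nat D *s w \<in> M"
    and generic: "\<And>\<sigma>. \<forall>i. \<sigma> i \<in> Hilb M \<Longrightarrow> \<not> invertible (column_matrix \<sigma>) \<Longrightarrow>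
      rvec w \<notin> span (range (\<lambda>i. rvec (\<sigma> i)))"
  obtains \<sigma> where "\<And>i. \<sigma> i \<in> Hilb M" "invertible (column_matrix \<sigma>)"
    "infinite {j\<in>J. \<exists>\<alpha> :: 'n \<Rightarrow> nat.
      of_nat (1 + j * D) *s x + of_nat D *s w = (\<Sum>i\<in>UNIV. of_nat (\<alpha> i) *s \<sigma> i)}"
proof -
  let ?J = "\<lambda>\<sigma>. {j\<in>J. \<exists>\<alpha> :: 'n \<Rightarrow> nat.
    of_nat (1 + j * D) *s x + of_nat D *s w = (\<Sum>i\<in>UNIV. of_nat (\<alpha> i) *s \<sigma> i)}"
  obtain \<sigma> where \<sigma>: "\<And>i. \<sigma> i \<in> Hilb M" and "infinite (?J \<sigma>)"
    using ICP_common_representation[where z="\<lambda>j. of_nat (1 + j * D) *s x + of_nat D *s w",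
        OF assms(1-3) progression] by blast
  have "invertible (column_matrix \<sigma>)"
  proof (rule ccontr)
    assume "\<not> invertible (column_matrix \<sigma>)"
    obtain j1 where j1: "j1 \<in> ?J \<sigma>"
      using infinite_imp_nonempty[OF \<open>infinite (?J \<sigma>)\<close>] by (meson ex_in_conv)
    obtain j2 where "j2 \<in> ?J \<sigma> - {j1}"
      using infinite_imp_nonempty[OF infinite_remove[OF \<open>infinite (?J \<sigma>)\<close>]] by (meson ex_in_conv)
    then have j2: "j2 \<in> ?J \<sigma>" "j1 \<noteq> j2"
      by blast+
    have in_span: "rvec (of_nat (1 + j * D) *s x + of_nat D *s w) \<in> span (range (\<lambda>i. rvec (\<sigma> i)))"
      if "j \<in> ?J \<sigma>" for j
      using that rvec_combination_in_span by force
    have "rvec w \<in> span (range (\<lambda>i. rvec (\<sigma> i)))"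
      using progression_in_span_imp_in_span[OF subspace_span \<open>D > 0\<close> j2(2) in_span[OF j1] in_span[OF j2(1)]] .
    then show False
      using generic \<sigma> \<open>\<not> invertible (column_matrix \<sigma>)\<close> by blast
  qed
  then show ?thesis
    using that \<sigma> \<open>infinite (?J \<sigma>)\<close> by blast
qed

lemma f_covered_if_in_real_cone:
  fixes x :: "int ^ 'n"
  assumes "finite G" "gp (monoid_gen G) = UNIV" "ICP (monoid_gen G)"
    and "rvec x \<in> real_cone (monoid_gen G)"
  shows "f_covered (monoid_gen G) x"
proof -
  let ?W = "\<lambda>\<sigma> :: 'n \<Rightarrow> int ^ 'n. span (range (\<lambda>i. rvec (\<sigma> i)))"
  define \<Sigma> where "\<Sigma> = {\<sigma> :: 'n \<Rightarrow> int ^ 'n. \<forall>i. \<sigma> i \<in> Hilb (monoid_gen G)}"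
  have "finite \<Sigma>"
    unfolding \<Sigma>_def using finite_set_of_finite_funs[of "UNIV :: 'n set" "Hilb (monoid_gen G)"]
    by (simp add: finite_Hilb_monoid_gen[OF assms(1)])
  then obtain D :: nat where "D > 0" and denom: "\<And>\<sigma> v k. \<sigma> \<in> \<Sigma> \<Longrightarrow> invertible (column_matrix \<sigma>) \<Longrightarrow>
      real D * (matrix_inv (column_matrix \<sigma>) *v rvec v) $ k \<in> \<int>"
    using common_denominator_column_matrices by blast
  let ?singular = "{\<sigma>\<in>\<Sigma>. \<not> invertible (column_matrix \<sigma>)}"
  have "finite (?W ` ?singular)"
    using \<open>finite \<Sigma>\<close> by simp
  moreover have "subspace W \<and> W \<noteq> UNIV" if "W \<in> ?W ` ?singular" for W
    using that by (auto simp: invertible_column_matrix_iff)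
  ultimately obtain J w where "infinite J" and generic: "rvec w \<notin> \<Union>(?W ` ?singular)"
    and progression: "\<And>j. j \<in> J \<Longrightarrow> of_nat (1 + j * D) *s x + of_nat D *s w \<in> monoid_gen G"
    using generic_progression_in_monoid_gen[OF assms(1,2,4) \<open>D > 0\<close>] by blast
  have "rvec w \<notin> ?W \<sigma>"
    if "\<forall>i. \<sigma> i \<in> Hilb (monoid_gen G)" "\<not> invertible (column_matrix \<sigma>)" for \<sigma>
    using generic that unfolding \<Sigma>_def by blast
  then obtain \<sigma> where "\<And>i. \<sigma> i \<in> Hilb (monoid_gen G)" "invertible (column_matrix \<sigma>)"
    and representations: "infinite {j\<in>J. \<exists>\<alpha> :: 'n \<Rightarrow> nat.
      of_nat (1 + j * D) *s x + of_nat D *s w = (\<Sum>i\<in>UNIV. of_nat (\<alpha> i) *s \<sigma> i)}"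
    using ICP_spanning_representation[OF assms(3) finite_Hilb_monoid_gen[OF assms(1)]
        \<open>infinite J\<close> \<open>D > 0\<close> progression] by blast
  then have "\<sigma> \<in> \<Sigma>"
    unfolding \<Sigma>_def by blast
  obtain e :: "'n \<Rightarrow> nat" where "x = (\<Sum>i\<in>UNIV. of_nat (e i) *s \<sigma> i)"
    using nat_coordinates_of_progression[OF \<open>invertible (column_matrix \<sigma>)\<close> \<open>D > 0\<close>
        denom[OF \<open>\<sigma> \<in> \<Sigma>\<close> \<open>invertible (column_matrix \<sigma>)\<close>] representations]
    by blast
  then show ?thesis
    using \<open>invertible (column_matrix \<sigma>)\<close> \<open>\<sigma> \<in> \<Sigma>\<close> spanning_family_independent[of "\<lambda>i. rvec (\<sigma> i)"]
    unfolding f_covered_def \<Sigma>_def invertible_column_matrix_iff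
    by (intro exI[of _ \<sigma>] exI[of _ e]) simp
qed

theorem theorem3p2:
  fixes M :: "(int ^ 'n) set"
  assumes "affine_monoid M"
    and "positive_monoid M"
    and "gp M = UNIV"
    and "ICP M"
  shows "M = {x. rvec x \<in> real_cone M} \<and> (\<forall>x\<in>M. f_covered M x)"
proof -
  obtain G where "finite G" "M = monoid_gen G"
    using assms(1) unfolding affine_monoid_def by blast
  have "f_covered M x" if "rvec x \<in> real_cone M" for x
    using f_covered_if_in_real_cone \<open>finite G\<close> \<open>M = monoid_gen G\<close> assms(3,4) that by blast
  moreover have "x \<in> M" if "f_covered M x" for x
    using that \<open>finite G\<close> \<open>M = monoid_gen G\<close> Hilb_subset
    unfolding f_covered_def by (blast intro: sum_in_monoid_gen smult_in_monoid_gen)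
  moreover have "rvec x \<in> real_cone M" if "x \<in> M" for x
    unfolding real_cone_def using that by (intro CollectI exI[of _ "{x}"] exI[of _ "\<lambda>_. 1"]) auto
  ultimately show ?thesis
    by blast
qed

end
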